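(* In the setting of OGP (with $\eta>0$, $\widetilde x_1\in C$, arbitrary predictions $\widehat x_t^*\in H$, and updates $\widetilde{x}_{t+1}=P_C(\widetilde{x}_t-\eta x_t^* )$, $x_t^*\in\partial\varphi_t(x_t)$, $x_{t+1}=P_C(\widetilde{x}_{t+1}-\eta\widehat{x}_{t+1}^* )$), for every $T\ge1$ and every $z_1,\dots,z_T\in C$, $$\sum_{t=1}^T\varphi_t(x_t)-\sum_{t=1}^T\varphi_t(z_t)\le \frac{\rho^2}{2\eta}+\frac{\rho}{\eta}\sum_{t=2}^T\|z_t-z_{t-1}\|+\frac{\eta}{2}\sum_{t=1}^T h_{\|x_t^*\|}\big(\|x_t^*-\widehat{x}_t^*\|\big),$$ where $h_\sigma(\delta)=\delta^2-(|\delta|-|\sigma|)_+^2$ and $(a)_+=\max\{a,0\}$.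
   Context: $H$ is a real Hilbert space; $C\subset H$ is nonempty, closed, convex with diameter $\rho=\sup_{x,y\in C}\|x-y\|<\infty$; $P_C$ is the metric projection onto $C$; each $\varphi_t$ is convex with $C\subset\operatorname{dom}\partial\varphi_t$, and $\partial$ is the subdifferential. *)

theory Defs
  imports "HOL-Analysis.Analysis"
begin

text \<open>Metric projection onto a set S in a real inner product space (for S nonempty,
closed, convex in a Hilbert space the nearest point exists and is unique).\<close>
definition metric_proj :: "'a::real_inner set \<Rightarrow> 'a \<Rightarrow> 'a" where
  "metric_proj S a = (SOME x. x \<in> S \<and> (\<forall>y\<in>S. dist a x \<le> dist a y))"

text \<open>Subdifferential of the extended-valued convex function equal to f on its
effective domain D and +infinity outside D.\<close>
definition subdiff :: "'a::real_inner set \<Rightarrow> ('a \<Rightarrow> real) \<Rightarrow> 'a \<Rightarrow> 'a set" where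
  "subdiff D f x = {s. x \<in> D \<and> (\<forall>y\<in>D. f x + inner s (y - x) \<le> f y)}"

definition pos_part :: "real \<Rightarrow> real" where
  "pos_part a = max a 0"

definition hfun :: "real \<Rightarrow> real \<Rightarrow> real" where
  "hfun \<sigma> \<delta> = \<delta>^2 - (pos_part (\<bar>\<delta>\<bar> - \<bar>\<sigma>\<bar>))^2"

end

theory Submission
  imports Defs
begin

text \<open>In round \<open>t\<close>, the variational inequalities of the two projections defining \<open>x t\<close> and
\<open>xt (t + 1)\<close>, combined with the subgradient inequality for \<open>xs t\<close>, give
\<open>\<phi> t (x t) - \<phi> t (z t) \<le> \<eta>/2 * h + (\<parallel>xt t - z t\<parallel>\<^sup>2 - \<parallel>xt (t + 1) - z t\<parallel>\<^sup>2) / (2 \<eta>)\<close>.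
Summed over the rounds, these distance terms telescope except where the comparator moves, and
each move from \<open>z (t - 1)\<close> to \<open>z t\<close> costs at most \<open>2 \<rho> \<parallel>z t - z (t - 1)\<parallel>\<close> since all points
lie in \<open>C\<close>.\<close>

lemma dist_midpoint_parallelogram:
  fixes u x y :: "'a::real_inner"
  shows "(dist x y)^2 = 2 * (dist u x)^2 + 2 * (dist u y)^2 - 4 * (dist u (midpoint x y))^2"
proof -
  have "u - midpoint x y = (1/2) *\<^sub>R ((u - x) + (u - y))"
    by (simp add: midpoint_def algebra_simps) (simp flip: scaleR_add_left)
  then have "4 * (dist u (midpoint x y))^2 = (norm ((u - x) + (u - y)))^2"
    by (simp add: dist_norm power_divide)
  moreover have "x - y = (u - y) - (u - x)" by simp
  ultimately show ?thesis
    unfolding dist_norm power2_norm_eq_inner by (simp add: inner_simps inner_commute)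
qed

lemma convex_dist_sq_le_infdist:
  fixes u x y :: "'a::real_inner"
  assumes "convex C" "x \<in> C" "y \<in> C"
  shows "(dist x y)^2 \<le> 2 * (dist u x)^2 + 2 * (dist u y)^2 - 4 * (infdist u C)^2"
proof -
  have "midpoint x y \<in> C"
    using convexD_alt[OF assms, of "1/2"] by (simp add: midpoint_def scaleR_add_right)
  then have "(infdist u C)^2 \<le> (dist u (midpoint x y))^2"
    by (intro power_mono infdist_le infdist_nonneg)
  then show ?thesis using dist_midpoint_parallelogram[of x y u] by linarith
qed

text \<open>The library's \<open>closest_point\<close> needs a Heine--Borel space; in a Hilbert space the
nearest point is obtained as the limit of a minimising sequence, which is Cauchy by the
parallelogram law.\<close>

lemma closest_point_exists_complete:
  fixes C :: "'a::{real_inner,complete_space} set"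
  assumes "closed C" "convex C" "C \<noteq> {}"
  shows "\<exists>p\<in>C. \<forall>y\<in>C. dist u p \<le> dist u y"
proof -
  define d where "d = infdist u C"
  have "\<exists>x\<in>C. (dist u x)^2 < d^2 + inverse (Suc n)" for n
  proof -
    have "d < sqrt (d^2 + inverse (Suc n))"
      using infdist_nonneg[of u C] by (simp add: d_def real_less_rsqrt)
    then obtain x where "x \<in> C" "dist u x < sqrt (d^2 + inverse (Suc n))"
      using \<open>C \<noteq> {}\<close> by (auto simp: d_def infdist_notempty cINF_less_iff)
    moreover from this(2) have "(dist u x)^2 < (sqrt (d^2 + inverse (Suc n)))^2"
      by (intro power_strict_mono) auto
    ultimately show ?thesis by auto
  qed
  then obtain x where xC: "\<And>n. x n \<in> C"
    and x_min: "\<And>n. (dist u (x n))^2 < d^2 + inverse (Suc n)"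
    by metis
  have x_close: "(dist (x m) (x n))^2 \<le> 2 * inverse (Suc m) + 2 * inverse (Suc n)" for m n
    using convex_dist_sq_le_infdist[OF \<open>convex C\<close> xC xC, of m n u] x_min[of m] x_min[of n]
    unfolding d_def by linarith
  have "Cauchy x"
  proof (rule metric_CauchyI)
    fix e :: real assume "0 < e"
    then obtain N where N: "inverse (Suc N) < e^2 / 4"
      using reals_Archimedean[of "e^2 / 4"] \<open>0 < e\<close> by auto
    have "dist (x m) (x n) < e" if "N \<le> m" "N \<le> n" for m n
    proof -
      have "inverse (Suc m) \<le> inverse (Suc N)" "inverse (Suc n) \<le> inverse (Suc N)"
        using that by (simp_all add: le_imp_inverse_le)
      then have "(dist (x m) (x n))^2 < e^2"
        using x_close[of m n] N by linarith
      then show ?thesis using \<open>0 < e\<close> by (simp add: power_less_imp_less_base)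
    qed
    then show "\<exists>M. \<forall>m\<ge>M. \<forall>n\<ge>M. dist (x m) (x n) < e" by blast
  qed
  then obtain p where p: "x \<longlonglongrightarrow> p"
    using Cauchy_convergent_iff convergent_def by blast
  have "p \<in> C" using closed_sequentially[OF \<open>closed C\<close> xC p] .
  have "(\<lambda>n. (dist u (x n))^2) \<longlonglongrightarrow> (dist u p)^2"
    by (intro tendsto_intros p)
  moreover have "(\<lambda>n. d^2 + inverse (Suc n)) \<longlonglongrightarrow> d^2 + 0"
    by (intro tendsto_intros LIMSEQ_inverse_real_of_nat)
  ultimately have "(dist u p)^2 \<le> d^2 + 0"
    by (rule LIMSEQ_le) (use x_min in \<open>auto intro: less_imp_le\<close>)
  then have "dist u p \<le> d"
    using infdist_nonneg[of u C] unfolding d_def by (auto intro: power2_le_imp_le)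
  then show ?thesis
    using \<open>p \<in> C\<close> infdist_le[of _ C u] unfolding d_def by (blast intro: order_trans)
qed

lemma metric_proj:
  fixes C :: "'a::{real_inner,complete_space} set"
  assumes "closed C" "convex C" "C \<noteq> {}"
  shows metric_proj_in: "metric_proj C u \<in> C"
    and metric_proj_le: "\<forall>y\<in>C. dist u (metric_proj C u) \<le> dist u y"
  unfolding metric_proj_def
  by (rule someI2_ex, use closest_point_exists_complete[OF assms] in blast, simp)+

lemma metric_proj_inner_le:
  fixes C :: "'a::{real_inner,complete_space} set"
  assumes "closed C" "convex C" "w \<in> C"
  shows "inner (u - metric_proj C u) (w - metric_proj C u) \<le> 0"
  using assms metric_proj[of C u] by (intro any_closest_point_dot) auto

lemma hfun_nonneg_cases:
  assumes "0 \<le> \<sigma>" "0 \<le> \<delta>"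
  shows "hfun \<sigma> \<delta> = (if \<delta> \<le> \<sigma> then \<delta>^2 else 2 * \<delta> * \<sigma> - \<sigma>^2)"
  using assms by (simp add: hfun_def pos_part_def power2_eq_square algebra_simps)

lemma inner_sub_norm_sq_le_weighted:
  fixes G M a b :: "'a::real_inner"
  assumes ab: "inner (b - M) a \<ge> 0" and k: "0 < k" "k \<le> 1"
  shows "2 * inner G a - (norm (a + b))^2 \<le> k * (norm (G - M))^2 + (1/k - 1) * (norm G)^2"
proof -
  define S where "S = k * k * (norm (M - G + a))^2 + (1 - k) * (norm (G - k *\<^sub>R a))^2
    + k * (norm ((1 - k) *\<^sub>R a + b))^2 + 2 * k * k * inner (b - M) a"
  have "0 \<le> S"
    unfolding S_def using k ab by (intro add_nonneg_nonneg mult_nonneg_nonneg) auto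
  moreover have "S = k * (k * (norm (G - M))^2 + (1/k - 1) * (norm G)^2 - (2 * inner G a - (norm (a + b))^2))"
    unfolding S_def power2_norm_eq_inner using k
    by (simp add: inner_simps inner_commute field_simps power2_eq_square)
  ultimately show ?thesis
    using k by (simp add: zero_le_mult_iff)
qed

text \<open>\<open>hfun \<sigma> \<delta>\<close> is the infimum over \<open>0 < k \<le> 1\<close> of \<open>k \<delta>\<^sup>2 + (1/k - 1) \<sigma>\<^sup>2\<close>, attained at
\<open>k = min 1 (\<sigma>/\<delta>)\<close> (approached as \<open>k \<rightarrow> 0\<close> when \<open>\<sigma> = 0\<close>).\<close>

lemma inner_sub_norm_sq_le_hfun:
  fixes g m a b :: "'a::real_inner"
  assumes ab: "inner (b - \<eta> *\<^sub>R m) a \<ge> 0" and "\<eta> > 0"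
  shows "2 * \<eta> * inner g a - (norm (a + b))^2 \<le> \<eta>^2 * hfun (norm g) (norm (g - m))"
proof -
  define \<sigma> where "\<sigma> = norm g"
  define \<delta> where "\<delta> = norm (g - m)"
  have weighted: "2 * \<eta> * inner g a - (norm (a + b))^2 \<le> \<eta>^2 * (k * \<delta>^2 + (1/k - 1) * \<sigma>^2)"
    if "0 < k" "k \<le> 1" for k
    using inner_sub_norm_sq_le_weighted[OF ab that, of "\<eta> *\<^sub>R g"] \<open>\<eta> > 0\<close>
    by (simp add: \<sigma>_def \<delta>_def flip: scaleR_diff_right) (simp add: power_mult_distrib algebra_simps)
  consider "\<delta> \<le> \<sigma>" | "g = 0" "\<sigma> < \<delta>" | "0 < \<sigma>" "\<sigma> < \<delta>"
    unfolding \<sigma>_def \<delta>_def by force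
  then show ?thesis
  proof cases
    case 1
    then show ?thesis
      using weighted[of 1] by (simp add: hfun_nonneg_cases \<sigma>_def \<delta>_def)
  next
    case 2
    then show ?thesis
      by (simp add: hfun_nonneg_cases \<sigma>_def \<delta>_def)
  next
    case 3
    have "(\<sigma> / \<delta>) * \<delta>^2 + (\<delta> / \<sigma> - 1) * \<sigma>^2 = 2 * \<delta> * \<sigma> - \<sigma>^2"
      using 3 by (simp add: power2_eq_square field_simps)
    moreover have "0 < \<sigma> / \<delta>" "\<sigma> / \<delta> \<le> 1"
      using 3 by auto
    ultimately show ?thesis
      using weighted[of "\<sigma> / \<delta>"] 3 by (simp add: hfun_nonneg_cases \<sigma>_def \<delta>_def)
  qed
qed

lemma optimistic_projection_step:
  fixes C :: "'a::{real_inner,complete_space} set"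
  assumes C: "closed C" "convex C" "C \<noteq> {}" and "z \<in> C" and "\<eta> > 0"
    and y': "y' = metric_proj C (y - \<eta> *\<^sub>R g)" and x: "x = metric_proj C (y - \<eta> *\<^sub>R m)"
  shows "2 * \<eta> * inner g (x - z)
    \<le> \<eta>^2 * hfun (norm g) (norm (g - m)) + (norm (y - z))^2 - (norm (y' - z))^2"
proof -
  have "y' \<in> C" using metric_proj_in[OF C] y' by simp
  have "inner ((y - \<eta> *\<^sub>R m) - x) (y' - x) \<le> 0"
    using metric_proj_inner_le[OF C(1,2) \<open>y' \<in> C\<close>] x by simp
  then have "inner ((y - x) - \<eta> *\<^sub>R m) (x - y') \<ge> 0"
    by (simp add: inner_diff_right algebra_simps)
  from inner_sub_norm_sq_le_hfun[OF this \<open>\<eta> > 0\<close>, of g]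
  have ax: "2 * \<eta> * inner g (x - y') - (norm (y - y'))^2 \<le> \<eta>^2 * hfun (norm g) (norm (g - m))"
    by simp
  have "inner ((y - \<eta> *\<^sub>R g) - y') (z - y') \<le> 0"
    using metric_proj_inner_le[OF C(1,2) \<open>z \<in> C\<close>] y' by simp
  then have az: "\<eta> * inner g (y' - z) \<le> inner (y - y') (y' - z)"
    by (simp add: inner_diff_left inner_diff_right inner_commute algebra_simps)
  have "(norm (y - z))^2 = (norm (y - y'))^2 + 2 * inner (y - y') (y' - z) + (norm (y' - z))^2"
    using power2_norm_eq_inner[of "(y - y') + (y' - z)"]
    by (simp add: power2_norm_eq_inner inner_simps inner_commute)
  moreover have "inner g (x - z) = inner g (x - y') + inner g (y' - z)"
    by (simp add: inner_diff_right)
  ultimately show ?thesis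
    using ax az by (simp add: algebra_simps)
qed

lemma norm_diff_sq_sub_le_diameter:
  fixes y z z' :: "'a::real_inner"
  assumes "bounded C" "y \<in> C" "z \<in> C" "z' \<in> C"
  shows "(norm (y - z'))^2 - (norm (y - z))^2 \<le> 2 * diameter C * norm (z' - z)"
proof -
  have "norm (y - z') \<le> diameter C" "norm (y - z) \<le> diameter C"
    using diameter_bounded_bound[OF \<open>bounded C\<close>] assms by (simp_all add: dist_norm)
  moreover have "\<bar>norm (y - z') - norm (y - z)\<bar> \<le> norm (z' - z)"
    using norm_triangle_ineq3[of "y - z'" "y - z"] by (simp add: norm_minus_commute)
  ultimately have "\<bar>norm (y - z') - norm (y - z)\<bar> * (norm (y - z') + norm (y - z))
      \<le> norm (z' - z) * (2 * diameter C)"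
    by (intro mult_mono) auto
  moreover have "(norm (y - z'))^2 - (norm (y - z))^2
      \<le> \<bar>norm (y - z') - norm (y - z)\<bar> * (norm (y - z') + norm (y - z))"
    by (simp add: power2_eq_square algebra_simps abs_mult_pos' flip: abs_mult)
  ultimately show ?thesis by (simp add: algebra_simps)
qed

lemma sum_telescope_diagonal:
  fixes f :: "nat \<Rightarrow> nat \<Rightarrow> 'b::ab_group_add"
  assumes "1 \<le> n"
  shows "(\<Sum>t=1..n. f t t - f (t + 1) t) = f 1 1 - f (n + 1) n + (\<Sum>t=2..n. f t t - f t (t - 1))"
  using assms
proof (induction n rule: nat_induct_at_least)
  case base
  then show ?case by simp
next
  case (Suc n)
  then show ?case by (simp add: sum.cl_ivl_Suc algebra_simps)
qed

lemma sum_dist_sq_decrease_le_drift: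
  fixes y z :: "nat \<Rightarrow> 'a::real_inner"
  assumes "bounded C" "1 \<le> n"
    and yC: "\<And>t. 1 \<le> t \<Longrightarrow> t \<le> n \<Longrightarrow> y t \<in> C"
    and zC: "\<And>t. 1 \<le> t \<Longrightarrow> t \<le> n \<Longrightarrow> z t \<in> C"
  shows "(\<Sum>t=1..n. (norm (y t - z t))^2 - (norm (y (t + 1) - z t))^2)
    \<le> (diameter C)^2 + 2 * diameter C * (\<Sum>t=2..n. norm (z t - z (t - 1)))"
proof -
  have "(norm (y 1 - z 1))^2 \<le> (diameter C)^2"
    using diameter_bounded_bound[OF \<open>bounded C\<close> yC zC, of 1 1] \<open>1 \<le> n\<close>
    by (intro power_mono) (auto simp: dist_norm)
  moreover have "(\<Sum>t=2..n. (norm (y t - z t))^2 - (norm (y t - z (t - 1)))^2)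
      \<le> (\<Sum>t=2..n. 2 * diameter C * norm (z t - z (t - 1)))"
    using yC zC by (intro sum_mono norm_diff_sq_sub_le_diameter[OF \<open>bounded C\<close>]) auto
  ultimately show ?thesis
    unfolding sum_telescope_diagonal[OF \<open>1 \<le> n\<close>, of "\<lambda>s t. (norm (y s - z t))^2"]
      sum_distrib_left
    using zero_le_power2[of "norm (y (n + 1) - z n)"] by linarith
qed

lemma subdiff_le_inner:
  assumes "g \<in> subdiff D f x" "z \<in> D"
  shows "f x - f z \<le> inner g (x - z)"
  using assms by (auto simp: subdiff_def inner_diff_right)

lemma optimistic_round_regret:
  fixes C :: "'a::{real_inner,complete_space} set"
  assumes C: "closed C" "convex C" "C \<noteq> {}" and "z \<in> C" "z \<in> D" "\<eta> > 0"
    and "g \<in> subdiff D f x"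
    and "y' = metric_proj C (y - \<eta> *\<^sub>R g)" "x = metric_proj C (y - \<eta> *\<^sub>R m)"
  shows "f x - f z \<le> \<eta> / 2 * hfun (norm g) (norm (g - m))
    + ((norm (y - z))^2 - (norm (y' - z))^2) / (2 * \<eta>)"
proof -
  have "2 * \<eta> * (f x - f z) \<le> 2 * \<eta> * inner g (x - z)"
    using subdiff_le_inner[OF assms(7,5)] \<open>\<eta> > 0\<close> by simp
  also have "\<dots> \<le> \<eta>^2 * hfun (norm g) (norm (g - m)) + ((norm (y - z))^2 - (norm (y' - z))^2)"
    using optimistic_projection_step[OF C assms(4,6,8,9)] by simp
  finally show ?thesis
    using \<open>\<eta> > 0\<close> by (simp add: field_simps power2_eq_square)
qed

theorem corollary1:
  fixes C :: "'a::{real_inner, complete_space} set"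
    and D :: "nat \<Rightarrow> 'a set"
    and \<phi> :: "nat \<Rightarrow> 'a \<Rightarrow> real"
    and \<eta> :: real
    and xt x xs xh z :: "nat \<Rightarrow> 'a"
    and T :: nat
  assumes C_ne: "C \<noteq> {}" and C_closed: "closed C" and C_convex: "convex C"
    and C_bounded: "bounded C"
    and D_convex: "\<And>t. t \<ge> 1 \<Longrightarrow> convex (D t)"
    and phi_convex: "\<And>t. t \<ge> 1 \<Longrightarrow> convex_on (D t) (\<phi> t)"
    and C_dom: "\<And>t y. t \<ge> 1 \<Longrightarrow> y \<in> C \<Longrightarrow> subdiff (D t) (\<phi> t) y \<noteq> {}"
    and eta_pos: "\<eta> > 0"
    and xt1: "xt 1 \<in> C"
    and upd_xt: "\<And>t. t \<ge> 1 \<Longrightarrow> xt (t + 1) = metric_proj C (xt t - \<eta> *\<^sub>R xs t)"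
    and sub: "\<And>t. t \<ge> 1 \<Longrightarrow> xs t \<in> subdiff (D t) (\<phi> t) (x t)"
    and upd_x: "\<And>t. t \<ge> 1 \<Longrightarrow> x t = metric_proj C (xt t - \<eta> *\<^sub>R xh t)"
    and T_ge: "T \<ge> 1"
    and zC: "\<And>t. 1 \<le> t \<Longrightarrow> t \<le> T \<Longrightarrow> z t \<in> C"
  shows "(\<Sum>t=1..T. \<phi> t (x t)) - (\<Sum>t=1..T. \<phi> t (z t))
     \<le> (diameter C)^2 / (2 * \<eta>) + (diameter C / \<eta>) * (\<Sum>t=2..T. norm (z t - z (t - 1)))
        + (\<eta> / 2) * (\<Sum>t=1..T. hfun (norm (xs t)) (norm (xs t - xh t)))"
proof -
  note C = C_closed C_convex C_ne
  define h where "h t = hfun (norm (xs t)) (norm (xs t - xh t))" for t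
  define R where "R t = (norm (xt t - z t))^2 - (norm (xt (t + 1) - z t))^2" for t
  have xt_in_C: "xt t \<in> C" if "1 \<le> t" for t
    using that by (induction t rule: nat_induct_at_least) (use xt1 upd_xt metric_proj_in[OF C] in auto)
  have round: "\<phi> t (x t) - \<phi> t (z t) \<le> \<eta> / 2 * h t + R t / (2 * \<eta>)" if "1 \<le> t" "t \<le> T" for t
  proof -
    have "z t \<in> D t" using C_dom[OF that(1) zC[OF that]] by (auto simp: subdiff_def)
    then show ?thesis unfolding h_def R_def
      using optimistic_round_regret[OF C zC[OF that] _ eta_pos sub upd_xt upd_x] that by simp
  qed
  have "(\<Sum>t=1..T. \<phi> t (x t)) - (\<Sum>t=1..T. \<phi> t (z t)) \<le> (\<Sum>t=1..T. \<eta> / 2 * h t + R t / (2 * \<eta>))"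
    unfolding sum_subtractf[symmetric] by (rule sum_mono) (use round in auto)
  also have "\<dots> = \<eta> / 2 * (\<Sum>t=1..T. h t) + (\<Sum>t=1..T. R t) / (2 * \<eta>)"
    by (simp add: sum.distrib sum_distrib_left sum_divide_distrib)
  also have "\<dots> \<le> \<eta> / 2 * (\<Sum>t=1..T. h t)
      + ((diameter C)^2 + 2 * diameter C * (\<Sum>t=2..T. norm (z t - z (t - 1)))) / (2 * \<eta>)"
    unfolding R_def using eta_pos
    by (intro add_left_mono divide_right_mono sum_dist_sq_decrease_le_drift[OF C_bounded T_ge]
        xt_in_C zC) auto
  finally show ?thesis
    using eta_pos by (simp add: h_def add_divide_distrib algebra_simps)
qed

end
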